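(* Let $(X,d)$ be a compact metric space and let $f_1,f_2:X\to X$ be continuous. Suppose there is $c\in X$ with $f_1(x)=c$ for all $x\in X$, $f_2(c)=c$, and $f_2$ is sensitive. Then the multiple mapping $F=\{f_1,f_2\}$ is (Hausdorff metric) sensitive.
   Context: For the multiple mapping $F=\{f_1,f_2\}$ and $n\ge 1$, $F^n(x)=\{f_{i_1}f_{i_2}\cdots f_{i_n}(x)\mid i_1,\dots,i_n\in\{1,2\}\}$, a nonempty compact subset of $X$. The Hausdorff metric on nonempty compact subsets is $d_H(A,B)=\max\{\sup_{a\in A}\inf_{b\in B}d(a,b),\sup_{b\in B}\inf_{a\in A}d(a,b)\}$. $F$ is (Hausdorff metric) sensitive if there is $\delta>0$ such that for every nonempty open $U\subset X$ there exist $x,y\in U$ and $n\in\mathbb{Z}^+$ with $d_H(F^n(x),F^n(y))>\delta$. A continuous map $f:X\to X$ is sensitive if there is $\delta>0$ such that for every nonempty open $U\subset X$ there exist $x,y\in U$ and $n\in\mathbb{Z}^+$ with $d(f^n(x),f^n(y))>\delta$. Here $\mathbb{Z}^+=\{1,2,3,\dots\}$. *)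

theory Defs
  imports "HOL-Analysis.Analysis"
begin

definition hausdorff_dist :: "'a::metric_space set \<Rightarrow> 'a set \<Rightarrow> real" where
  "hausdorff_dist A B =
     max (SUP a\<in>A. INF b\<in>B. dist a b) (SUP b\<in>B. INF a\<in>A. dist a b)"

definition comp_word :: "(nat \<Rightarrow> 'a \<Rightarrow> 'a) \<Rightarrow> nat list \<Rightarrow> 'a \<Rightarrow> 'a" where
  "comp_word f is = foldr (\<lambda>i g. f i \<circ> g) is id"

text \<open>F^n(x) for the multiple mapping F = {f 1, f 2}.\<close>
definition multi_iter :: "(nat \<Rightarrow> 'a \<Rightarrow> 'a) \<Rightarrow> nat \<Rightarrow> 'a \<Rightarrow> 'a set" where
  "multi_iter f n x = {comp_word f is x | is. length is = n \<and> set is \<subseteq> {1, 2}}"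

definition sensitive_map :: "'a::metric_space set \<Rightarrow> ('a \<Rightarrow> 'a) \<Rightarrow> bool" where
  "sensitive_map X g \<longleftrightarrow> (\<exists>\<delta>>0. \<forall>U. openin (top_of_set X) U \<and> U \<noteq> {} \<longrightarrow>
      (\<exists>x\<in>U. \<exists>y\<in>U. \<exists>n\<ge>1. dist ((g ^^ n) x) ((g ^^ n) y) > \<delta>))"

definition hausdorff_sensitive :: "'a::metric_space set \<Rightarrow> (nat \<Rightarrow> 'a \<Rightarrow> 'a) \<Rightarrow> bool" where
  "hausdorff_sensitive X f \<longleftrightarrow> (\<exists>\<delta>>0. \<forall>U. openin (top_of_set X) U \<and> U \<noteq> {} \<longrightarrow>
      (\<exists>x\<in>U. \<exists>y\<in>U. \<exists>n\<ge>1. hausdorff_dist (multi_iter f n x) (multi_iter f n y) > \<delta>))"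

end

theory Submission
  imports Defs
begin

text \<open>Since f1 collapses X to the common fixed point c, every word containing the index 1 sends
  a point of X to c, so F^n(x) = {f2^n(x), c}. Two sets {a, c} and {b, c} are at Hausdorff
  distance at least d(a, b)/2, so a sensitivity constant \<delta> of f2 yields the constant \<delta>/2 for F.\<close>

lemma hausdorff_dist_insert_common:
  fixes a b c :: "'a::metric_space"
  shows "hausdorff_dist {a, c} {b, c} = max (min (dist a b) (dist a c)) (min (dist a b) (dist b c))"
  unfolding hausdorff_dist_def
  by (simp add: cSup_insert cInf_insert dist_commute inf_real_def sup_real_def)

lemma dist_le_twice_hausdorff_dist_insert_common:
  fixes a b c :: "'a::metric_space"
  shows "dist a b \<le> 2 * hausdorff_dist {a, c} {b, c}"
proof -
  have "dist a b \<le> dist a c + dist b c"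
    by (rule dist_triangle2)
  then show ?thesis
    unfolding hausdorff_dist_insert_common by (auto simp: max_def min_def)
qed

lemma comp_word_Cons [simp]: "comp_word f (i # is) x = f i (comp_word f is x)"
  by (simp add: comp_word_def)

lemma comp_word_collapse:
  fixes f1 f2 :: "'a \<Rightarrow> 'a"
  defines "f \<equiv> \<lambda>i. if i = 1 then f1 else f2"
  assumes "f2 ` X \<subseteq> X" "c \<in> X" "\<forall>x\<in>X. f1 x = c" "f2 c = c" "x \<in> X"
    and "set is \<subseteq> {1, 2}"
  shows "comp_word f is x \<in> X \<and>
    comp_word f is x = (if set is \<subseteq> {2} then (f2 ^^ length is) x else c)"
  using \<open>set is \<subseteq> {1, 2}\<close>
proof (induction "is")
  case Nil
  then show ?case using \<open>x \<in> X\<close> by (simp add: comp_word_def)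
next
  case (Cons i "is")
  then have "set is \<subseteq> {1, 2}"
    by simp
  then have "comp_word f is x \<in> X"
    and IH: "comp_word f is x = (if set is \<subseteq> {2} then (f2 ^^ length is) x else c)"
    using Cons.IH by blast+
  from Cons.prems consider "i = 1" | "i = 2" by auto
  then show ?case
  proof cases
    case 1
    then show ?thesis using \<open>comp_word f is x \<in> X\<close> assms(3,4) by (simp add: f_def)
  next
    case 2
    then show ?thesis using \<open>comp_word f is x \<in> X\<close> IH assms(2,3,5) by (auto simp: f_def)
  qed
qed

lemma multi_iter_collapse:
  fixes f1 f2 :: "'a \<Rightarrow> 'a"
  defines "f \<equiv> \<lambda>i. if i = 1 then f1 else f2"
  assumes "f2 ` X \<subseteq> X" "c \<in> X" "\<forall>x\<in>X. f1 x = c" "f2 c = c" "x \<in> X" "n \<ge> 1"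
  shows "multi_iter f n x = {(f2 ^^ n) x, c}"
proof
  note collapse = comp_word_collapse[of f2 X c f1 x, folded f_def, OF assms(2-6)]
  show "multi_iter f n x \<subseteq> {(f2 ^^ n) x, c}"
    using collapse unfolding multi_iter_def by auto
  define v :: "nat list" where "v = replicate n 2"
  have "set v \<subseteq> {1, 2}" "set v \<subseteq> {2}" "length v = n"
    by (auto simp: v_def set_replicate_conv_if)
  then have "(f2 ^^ n) x \<in> multi_iter f n x"
    using collapse[of v] unfolding multi_iter_def by (auto intro!: exI[of _ v])
  define w :: "nat list" where "w = 1 # replicate (n - 1) 2"
  have "set w \<subseteq> {1, 2}" "\<not> set w \<subseteq> {2}" "length w = n"
    using \<open>n \<ge> 1\<close> by (auto simp: w_def set_replicate_conv_if)
  then have "c \<in> multi_iter f n x"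
    using collapse[of w] unfolding multi_iter_def by (auto intro!: exI[of _ w])
  with \<open>(f2 ^^ n) x \<in> multi_iter f n x\<close> show "{(f2 ^^ n) x, c} \<subseteq> multi_iter f n x"
    by blast
qed

theorem theorem3p3:
  fixes X :: "'a::metric_space set" and f1 f2 :: "'a \<Rightarrow> 'a" and c :: 'a
  assumes "compact X"
    and "continuous_on X f1" and "f1 ` X \<subseteq> X"
    and "continuous_on X f2" and "f2 ` X \<subseteq> X"
    and "c \<in> X" and "\<forall>x\<in>X. f1 x = c" and "f2 c = c"
    and "sensitive_map X f2"
  shows "hausdorff_sensitive X (\<lambda>i. if i = 1 then f1 else f2)"
proof -
  let ?F = "\<lambda>i. if i = 1 then f1 else f2"
  obtain \<delta> where "\<delta> > 0" and sens: "\<And>U. openin (top_of_set X) U \<and> U \<noteq> {} \<Longrightarrow>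
      \<exists>x\<in>U. \<exists>y\<in>U. \<exists>n\<ge>1. dist ((f2 ^^ n) x) ((f2 ^^ n) y) > \<delta>"
    using \<open>sensitive_map X f2\<close> unfolding sensitive_map_def by blast
  have "\<exists>x\<in>U. \<exists>y\<in>U. \<exists>n\<ge>1. hausdorff_dist (multi_iter ?F n x) (multi_iter ?F n y) > \<delta> / 2"
    if U: "openin (top_of_set X) U \<and> U \<noteq> {}" for U
  proof -
    obtain x y n where xy: "x \<in> U" "y \<in> U" and "n \<ge> 1"
      and far: "dist ((f2 ^^ n) x) ((f2 ^^ n) y) > \<delta>"
      using sens[OF U] by blast
    have "x \<in> X" "y \<in> X"
      using U xy openin_imp_subset by blast+
    then have "hausdorff_dist (multi_iter ?F n x) (multi_iter ?F n y)
        = hausdorff_dist {(f2 ^^ n) x, c} {(f2 ^^ n) y, c}"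
      using multi_iter_collapse[OF assms(5-8) _ \<open>n \<ge> 1\<close>] by simp
    also have "\<dots> > \<delta> / 2"
      using far dist_le_twice_hausdorff_dist_insert_common[of "(f2 ^^ n) x" "(f2 ^^ n) y" c]
      by linarith
    finally show ?thesis
      using xy \<open>n \<ge> 1\<close> by blast
  qed
  with \<open>\<delta> > 0\<close> show ?thesis
    unfolding hausdorff_sensitive_def by (intro exI[of _ "\<delta> / 2"]) auto
qed

end
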